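(* Let $p$ be an odd prime and $K$ a field of characteristic $p$. Let $M$ be either the cyclic group $\mathbb{Z}/p^2\mathbb{Z}$ or the group $M_{p^3}$. Then the smallest integer $n$ such that $M$ embeds (as a group) into $\mathrm{U}_n(K)$ is $n=p+1$.
   Context: $M_{p^3}=\langle x,y\mid x^{p^2}=y^p=1,\ yxy^{-1}=x^{1+p}\rangle$ is the extra-special group of order $p^3$ and exponent $p^2$. $\mathrm{U}_n(K)$ is the group of upper-triangular unipotent $n\times n$ matrices over $K$. *)

theory Defs
  imports "HOL-Algebra.Algebra"
begin

definition unitri_group :: "nat \<Rightarrow> (nat \<Rightarrow> nat \<Rightarrow> 'a::field) monoid" where
  "unitri_group n =
     \<lparr> carrier = {A. (\<forall>i j. (n \<le> i \<or> n \<le> j) \<longrightarrow> A i j = 0)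
                  \<and> (\<forall>i<n. A i i = 1)
                  \<and> (\<forall>i<n. \<forall>j<i. A i j = 0)},
       monoid.mult = (\<lambda>A B i j. if i < n \<and> j < n then (\<Sum>k<n. A i k * B k j) else 0),
       one = (\<lambda>i j. if i < n \<and> i = j then 1 else 0) \<rparr>"

text \<open>The extra-special group M_{p^3} = < x, y | x^(p^2) = y^p = 1, y x y^-1 = x^(1+p) >,
  realised concretely: the pair (a, b) with 0 <= a < p^2, 0 <= b < p stands for x^a y^b.
  Since y^b x^c = x^(c (1+p)^b) y^b, the product is
  (a,b)(c,d) = (a + c (1+p)^b mod p^2, b + d mod p).\<close>
definition Mp3 :: "nat \<Rightarrow> (nat \<times> nat) monoid" where
  "Mp3 p =
     \<lparr> carrier = {0..<p^2} \<times> {0..<p},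
       monoid.mult = (\<lambda>(a, b) (c, d). ((a + c * (1 + p) ^ b) mod p^2, (b + d) mod p)),
       one = (0, 0) \<rparr>"

definition group_embeds :: "('a, 'c) monoid_scheme \<Rightarrow> ('b, 'd) monoid_scheme \<Rightarrow> bool" where
  "group_embeds G H \<longleftrightarrow> (\<exists>h. h \<in> hom G H \<and> inj_on h (carrier G))"

end

theory Submission
  imports Defs "Jordan_Normal_Form.Jordan_Normal_Form" "HOL-Number_Theory.Cong"
begin

text \<open>
  Write a unitriangular matrix as \<open>1 + D\<close> with \<open>D\<close> strictly upper triangular. In characteristic
  \<open>p\<close> the coefficients \<open>p choose k\<close> vanish for \<open>0 < k < p\<close>, so \<open>(1 + D)^p = 1 + D^p\<close>, and
  \<open>D^p = 0\<close> once the size is at most \<open>p\<close>. So \<open>U_n(K)\<close> has exponent \<open>p\<close> for \<open>n \<le> p\<close>, whereas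
  both \<open>\<int>/p^2\<close> and \<open>M_{p^3}\<close> have elements of order \<open>p^2\<close>.
  In size \<open>p + 1\<close> the powers of the unipotent Jordan block \<open>J\<close> have entries
  \<open>r choose (j - i)\<close>, so \<open>J\<close> has order exactly \<open>p^2\<close> and generates a copy of \<open>\<int>/p^2\<close>.
  The elementary matrix \<open>Y = 1 + E_{0,p-1}\<close> has order \<open>p\<close> and satisfies \<open>Y J = J^(p+1) Y\<close>,
  so \<open>x^a y^b \<mapsto> J^a Y^b\<close> embeds \<open>M_{p^3}\<close>.
\<close>

section \<open>Powers in monoids\<close>

lemma hom_nat_pow_Suc:
  assumes G: "monoid G" and H: "monoid H" and h: "h \<in> hom G H" and x: "x \<in> carrier G"
  shows "h (x [^]\<^bsub>G\<^esub> Suc k) = h x [^]\<^bsub>H\<^esub> Suc k"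
proof (induction k)
  case 0
  show ?case using G H h x by (simp add: monoid.l_one hom_in_carrier)
next
  case (Suc k)
  have "h (x [^]\<^bsub>G\<^esub> Suc (Suc k)) = h (x [^]\<^bsub>G\<^esub> Suc k \<otimes>\<^bsub>G\<^esub> x)"
    by (simp only: nat_pow_Suc)
  also have "\<dots> = h (x [^]\<^bsub>G\<^esub> Suc k) \<otimes>\<^bsub>H\<^esub> h x"
    by (rule hom_mult[OF h monoid.nat_pow_closed[OF G x] x])
  also have "\<dots> = h x [^]\<^bsub>H\<^esub> Suc k \<otimes>\<^bsub>H\<^esub> h x"
    by (simp only: Suc)
  finally show ?case by (simp only: nat_pow_Suc[symmetric])
qed

lemma (in monoid) nat_pow_mod:
  fixes N k :: nat
  assumes x: "x \<in> carrier G" and N: "x [^] N = \<one>"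
  shows "x [^] k = x [^] (k mod N)"
proof -
  have "x [^] k = x [^] (N * (k div N) + k mod N)" by simp
  also have "\<dots> = (x [^] N) [^] (k div N) \<otimes> x [^] (k mod N)"
    using x by (simp add: nat_pow_pow nat_pow_mult)
  finally show ?thesis using x N by simp
qed

lemma (in monoid) nat_pow_twisted_commute:
  fixes m b c :: nat
  assumes x: "x \<in> carrier G" and y: "y \<in> carrier G" and yx: "y \<otimes> x = x [^] m \<otimes> y"
  shows "y [^] b \<otimes> x [^] c = x [^] (c * m ^ b) \<otimes> y [^] b"
proof -
  have conj: "y \<otimes> x [^] c = x [^] (c * m) \<otimes> y" for c :: nat
  proof (induction c)
    case (Suc c)
    have "y \<otimes> x [^] Suc c = x [^] (c * m) \<otimes> (y \<otimes> x)"
      using Suc x y by (simp flip: m_assoc)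
    also have "\<dots> = x [^] (Suc c * m) \<otimes> y"
      using x y by (simp add: yx nat_pow_mult add.commute flip: m_assoc)
    finally show ?case .
  qed (use y in simp)
  show ?thesis
  proof (induction b arbitrary: c)
    case (Suc b)
    have "y [^] Suc b \<otimes> x [^] c = (y [^] b \<otimes> x [^] (c * m)) \<otimes> y"
      using x y by (simp add: m_assoc conj)
    also have "\<dots> = x [^] (c * m ^ Suc b) \<otimes> y [^] Suc b"
      using x y by (simp add: Suc m_assoc mult.assoc)
    finally show ?case .
  qed (use x in simp)
qed

lemma (in monoid) semidirect_mult:
  fixes a b c d m M N :: nat
  assumes x: "x \<in> carrier G" and y: "y \<in> carrier G" and yx: "y \<otimes> x = x [^] m \<otimes> y"
    and xN: "x [^] N = \<one>" and yM: "y [^] M = \<one>"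
  shows "(x [^] a \<otimes> y [^] b) \<otimes> (x [^] c \<otimes> y [^] d)
       = x [^] ((a + c * m ^ b) mod N) \<otimes> y [^] ((b + d) mod M)"
proof -
  have "(x [^] a \<otimes> y [^] b) \<otimes> (x [^] c \<otimes> y [^] d) = x [^] a \<otimes> (y [^] b \<otimes> x [^] c) \<otimes> y [^] d"
    using x y by (simp add: m_assoc)
  also have "\<dots> = x [^] a \<otimes> (x [^] (c * m ^ b) \<otimes> y [^] b) \<otimes> y [^] d"
    by (simp only: nat_pow_twisted_commute[OF x y yx])
  also have "\<dots> = x [^] (a + c * m ^ b) \<otimes> y [^] (b + d)"
    using x y by (simp add: m_assoc flip: nat_pow_mult)
  finally show ?thesis
    using nat_pow_mod[OF x xN] nat_pow_mod[OF y yM] by metis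
qed

lemma (in monoid) inj_on_nat_pow_prime_square:
  assumes x: "x \<in> carrier G" and p: "Factorial_Ring.prime p"
    and sq: "x [^] (p^2) = \<one>" and ne: "x [^] p \<noteq> \<one>"
  shows "inj_on (\<lambda>k::nat. x [^] k) {..<p^2}"
proof -
  interpret U: group "units_of G" by (rule units_group)
  have p2: "p^2 = Suc (p^2 - 1)" using p by (simp add: prime_gt_0_nat)
  have "x \<in> Units G"
    unfolding Units_def using x sq p2 nat_pow_Suc2[OF x, of "p^2 - 1"]
    by (auto intro!: bexI[of _ "x [^] (p^2 - 1)"] simp del: nat_pow_Suc2 simp flip: nat_pow_Suc)
  then have xU: "x \<in> carrier (units_of G)" and pow: "\<And>k::nat. x [^]\<^bsub>units_of G\<^esub> k = x [^] k"
    by (simp_all add: units_of_carrier units_of_pow)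
  have dvd: "U.ord x dvd p^2"
    using sq U.pow_eq_id[OF xU, of "p^2"] by (simp add: pow units_of_one)
  have ndvd: "\<not> U.ord x dvd p"
    using ne U.pow_eq_id[OF xU, of p] by (simp add: pow units_of_one)
  obtain i where i: "i \<le> 2" and ord: "U.ord x = p ^ i"
    using divides_primepow_nat[OF p] dvd by blast
  have "i = 2"
  proof (rule ccontr)
    assume "i \<noteq> 2"
    with i have "i = 0 \<or> i = 1" by linarith
    with ndvd ord show False by auto
  qed
  with ord have "{0 .. U.ord x - 1} = {..<p^2}"
    using p2 by (auto simp: atLeast0AtMost lessThan_Suc_atMost[symmetric])
  then show ?thesis
    using U.ord_inj[OF xU] by (simp add: pow)
qed

section \<open>The group \<open>M_{p^3}\<close>\<close>

lemma one_plus_pow_mod_square: "(1 + p) ^ k mod p^2 = (1 + k * p) mod (p^2 :: nat)"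
proof (induction k)
  case (Suc k)
  have "(1 + p) ^ Suc k mod p^2 = (1 + k * p) * (1 + p) mod p^2"
    by (metis Suc mod_mult_left_eq power_Suc2)
  also have "(1 + k * p) * (1 + p) = 1 + Suc k * p + k * p^2"
    by (simp add: algebra_simps power2_eq_square)
  finally show ?case by simp
qed simp

lemma one_plus_pow_mod_square_period: "(1 + p) ^ k mod p^2 = (1 + p) ^ (k mod p) mod (p^2 :: nat)"
proof -
  have "k * p = (k mod p) * p + (k div p) * p^2"
    by (metis div_mult_mod_eq add.commute distrib_right mult.assoc mult.commute power2_eq_square)
  then show ?thesis unfolding one_plus_pow_mod_square by (simp add: add.assoc)
qed

lemma Mp3_mult: "(a, b) \<otimes>\<^bsub>Mp3 p\<^esub> (c, d) = ((a + c * (1 + p) ^ b) mod p^2, (b + d) mod p)"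
  by (simp add: Mp3_def)

lemma group_Mp3:
  assumes "p > 0"
  shows "group (Mp3 p)"
proof (rule groupI)
  show "x \<otimes>\<^bsub>Mp3 p\<^esub> y \<in> carrier (Mp3 p)" if "x \<in> carrier (Mp3 p)" "y \<in> carrier (Mp3 p)" for x y
    using that assms by (auto simp: Mp3_def)
  show "\<one>\<^bsub>Mp3 p\<^esub> \<in> carrier (Mp3 p)" using assms by (simp add: Mp3_def)
  show "\<one>\<^bsub>Mp3 p\<^esub> \<otimes>\<^bsub>Mp3 p\<^esub> x = x" if "x \<in> carrier (Mp3 p)" for x
    using that by (auto simp: Mp3_def)
next
  fix x y z assume "x \<in> carrier (Mp3 p)" "y \<in> carrier (Mp3 p)" "z \<in> carrier (Mp3 p)"
  obtain a b c d e f where xyz: "x = (a, b)" "y = (c, d)" "z = (e, f)"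
    by (cases x, cases y, cases z)
  let ?u = "1 + p" and ?N = "p^2"
  have twist: "e * ?u ^ ((b + d) mod p) mod ?N = e * ?u ^ b * ?u ^ d mod ?N"
    by (metis mod_mult_right_eq one_plus_pow_mod_square_period power_add mult.assoc)
  have "((a + c * ?u ^ b) mod ?N + e * ?u ^ ((b + d) mod p)) mod ?N
      = (a + c * ?u ^ b + e * ?u ^ ((b + d) mod p)) mod ?N"
    by (rule mod_add_left_eq)
  also have "\<dots> = (a + c * ?u ^ b + e * ?u ^ b * ?u ^ d) mod ?N"
    by (rule mod_add_cong[OF refl twist])
  also have "\<dots> = (a + (c + e * ?u ^ d) * ?u ^ b) mod ?N"
    by (simp add: algebra_simps)
  also have "\<dots> = (a + (c + e * ?u ^ d) mod ?N * ?u ^ b) mod ?N"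
    by (rule mod_add_cong[OF refl mod_mult_left_eq[symmetric]])
  finally have "((a + c * ?u ^ b) mod ?N + e * ?u ^ ((b + d) mod p)) mod ?N
      = (a + (c + e * ?u ^ d) mod ?N * ?u ^ b) mod ?N" .
  then show "x \<otimes>\<^bsub>Mp3 p\<^esub> y \<otimes>\<^bsub>Mp3 p\<^esub> z = x \<otimes>\<^bsub>Mp3 p\<^esub> (y \<otimes>\<^bsub>Mp3 p\<^esub> z)"
    unfolding xyz Mp3_mult by (simp add: mod_add_left_eq mod_add_right_eq add.assoc)
next
  fix x assume "x \<in> carrier (Mp3 p)"
  then obtain a b where x: "x = (a, b)" "b < p" by (auto simp: Mp3_def)
  define d where "d = (p - b) mod p"
  define c where "c = (p^2 - a * (1 + p) ^ d mod p^2) mod p^2"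
  have "(c + a * (1 + p) ^ d) mod p^2 = (p^2 - a * (1 + p) ^ d mod p^2 + a * (1 + p) ^ d mod p^2) mod p^2"
    unfolding c_def by (metis mod_add_left_eq mod_add_right_eq)
  also have "\<dots> = 0" using assms by simp
  finally have "(c, d) \<otimes>\<^bsub>Mp3 p\<^esub> x = \<one>\<^bsub>Mp3 p\<^esub>"
    using x assms by (simp add: Mp3_mult d_def Mp3_def mod_add_left_eq)
  moreover have "(c, d) \<in> carrier (Mp3 p)" using assms by (simp add: Mp3_def c_def d_def)
  ultimately show "\<exists>y\<in>carrier (Mp3 p). y \<otimes>\<^bsub>Mp3 p\<^esub> x = \<one>\<^bsub>Mp3 p\<^esub>" by blast
qed

lemma Mp3_pow_generator: "(1, 0) [^]\<^bsub>Mp3 p\<^esub> (k::nat) = (k mod p^2, 0)"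
  by (induction k) (simp_all add: Mp3_def mod_Suc_eq)

section \<open>Unitriangular matrices\<close>

definition unitriangular :: "nat \<Rightarrow> 'a::semiring_1 mat \<Rightarrow> bool" where
  "unitriangular n A \<longleftrightarrow> A \<in> carrier_mat n n \<and> upper_triangular A \<and> (\<forall>i<n. A $$ (i, i) = 1)"

definition fun_of_mat :: "nat \<Rightarrow> 'a::zero mat \<Rightarrow> nat \<Rightarrow> nat \<Rightarrow> 'a" where
  "fun_of_mat n A = (\<lambda>i j. if i < n \<and> j < n then A $$ (i, j) else 0)"

lemma index_mult_mat_square:
  "A \<in> carrier_mat n n \<Longrightarrow> B \<in> carrier_mat n n \<Longrightarrow> i < n \<Longrightarrow> j < n \<Longrightarrow>
    (A * B) $$ (i, j) = (\<Sum>k<n. A $$ (i, k) * B $$ (k, j))"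
  by (simp add: scalar_prod_def lessThan_atLeast0)

lemma unitriangular_one: "unitriangular n (1\<^sub>m n)"
  by (simp add: unitriangular_def)

lemma unitriangular_mult:
  assumes A: "unitriangular n A" and B: "unitriangular n B"
  shows "unitriangular n (A * B)"
proof -
  have Ac: "A \<in> carrier_mat n n" and Bc: "B \<in> carrier_mat n n"
    using A B by (simp_all add: unitriangular_def)
  have A0: "A $$ (i, k) = 0" if "k < i" "i < n" for i k
    using A that Ac by (auto simp: unitriangular_def upper_triangular_def)
  have B0: "B $$ (k, j) = 0" if "j < k" "k < n" for j k
    using B that Bc by (auto simp: unitriangular_def upper_triangular_def)
  have off: "A $$ (i, k) * B $$ (k, j) = 0" if "j \<le> i" "k \<noteq> i \<or> j < i" "i < n" "k < n" for i j k
    using that A0 B0 by (cases "k < i") auto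
  have "(A * B) $$ (i, j) = 0" if "j < i" "i < n" for i j
    using that off by (simp add: index_mult_mat_square[OF Ac Bc] sum.neutral)
  moreover have "(A * B) $$ (i, i) = 1" if "i < n" for i
  proof -
    have "(A * B) $$ (i, i) = (\<Sum>k<n. if k = i then A $$ (i, i) * B $$ (i, i) else 0)"
      unfolding index_mult_mat_square[OF Ac Bc that that] using that off by (intro sum.cong) auto
    then show ?thesis using A B that by (simp add: unitriangular_def)
  qed
  ultimately show ?thesis using Ac Bc by (auto simp: unitriangular_def upper_triangular_def)
qed

lemma unitriangular_pow: "unitriangular n A \<Longrightarrow> unitriangular n (A ^\<^sub>m k)"
  by (induction k) (auto simp: unitriangular_mult unitriangular_def[of n A] unitriangular_one)

lemma carrier_unitri_group: "carrier (unitri_group n) = fun_of_mat n ` {A. unitriangular n A}"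
proof (intro equalityI subsetI)
  fix A assume A: "A \<in> carrier (unitri_group n)"
  have "A = fun_of_mat n (mat n n (\<lambda>(i, j). A i j))"
    using A by (auto simp: unitri_group_def fun_of_mat_def fun_eq_iff)
  moreover have "unitriangular n (mat n n (\<lambda>(i, j). A i j))"
    using A by (auto simp: unitri_group_def unitriangular_def upper_triangular_def)
  ultimately show "A \<in> fun_of_mat n ` {A. unitriangular n A}" by blast
qed (auto simp: unitri_group_def unitriangular_def upper_triangular_def fun_of_mat_def)

lemma fun_of_mat_mult:
  "A \<in> carrier_mat n n \<Longrightarrow> B \<in> carrier_mat n n \<Longrightarrow>
    fun_of_mat n A \<otimes>\<^bsub>unitri_group n\<^esub> fun_of_mat n B = fun_of_mat n (A * B)"
  by (auto simp: unitri_group_def fun_of_mat_def index_mult_mat_square fun_eq_iff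
      simp del: index_mult_mat intro!: sum.cong)

lemma one_unitri_group: "\<one>\<^bsub>unitri_group n\<^esub> = fun_of_mat n (1\<^sub>m n)"
  by (auto simp: unitri_group_def fun_of_mat_def fun_eq_iff)

lemma inj_on_fun_of_mat: "inj_on (fun_of_mat n) (carrier_mat n n)"
proof (rule inj_onI)
  fix A B :: "'a mat"
  assume A: "A \<in> carrier_mat n n" and B: "B \<in> carrier_mat n n" and eq: "fun_of_mat n A = fun_of_mat n B"
  show "A = B"
  proof (rule eq_matI)
    fix i j assume "i < dim_row B" "j < dim_col B"
    then show "A $$ (i, j) = B $$ (i, j)"
      using fun_cong[OF fun_cong[OF eq, of i], of j] B by (simp add: fun_of_mat_def)
  qed (use A B in auto)
qed

lemma monoid_unitri_group: "monoid (unitri_group n :: (nat \<Rightarrow> nat \<Rightarrow> 'a::field) monoid)"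
proof (rule monoidI, unfold carrier_unitri_group)
  fix x y z :: "nat \<Rightarrow> nat \<Rightarrow> 'a"
  assume "x \<in> fun_of_mat n ` {A. unitriangular n A}" "y \<in> fun_of_mat n ` {A. unitriangular n A}"
    "z \<in> fun_of_mat n ` {A. unitriangular n A}"
  then obtain A B C where "unitriangular n A" "unitriangular n B" "unitriangular n C"
    and xyz: "x = fun_of_mat n A" "y = fun_of_mat n B" "z = fun_of_mat n C" by blast
  then have c: "A \<in> carrier_mat n n" "B \<in> carrier_mat n n" "C \<in> carrier_mat n n"
    by (simp_all add: unitriangular_def)
  show "x \<otimes>\<^bsub>unitri_group n\<^esub> y \<in> fun_of_mat n ` {A. unitriangular n A}"
    using xyz c \<open>unitriangular n A\<close> \<open>unitriangular n B\<close>
    by (auto simp: fun_of_mat_mult intro: unitriangular_mult)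
  show "x \<otimes>\<^bsub>unitri_group n\<^esub> y \<otimes>\<^bsub>unitri_group n\<^esub> z = x \<otimes>\<^bsub>unitri_group n\<^esub> (y \<otimes>\<^bsub>unitri_group n\<^esub> z)"
    using c unfolding xyz by (simp add: fun_of_mat_mult assoc_mult_mat[of A n n B n C n])
next
  show "\<one>\<^bsub>unitri_group n\<^esub> \<in> fun_of_mat n ` {A. unitriangular n A}"
    using unitriangular_one by (auto simp: one_unitri_group)
next
  fix x :: "nat \<Rightarrow> nat \<Rightarrow> 'a" assume "x \<in> fun_of_mat n ` {A. unitriangular n A}"
  then obtain A where A: "A \<in> carrier_mat n n" "x = fun_of_mat n A" by (auto simp: unitriangular_def)
  then show "\<one>\<^bsub>unitri_group n\<^esub> \<otimes>\<^bsub>unitri_group n\<^esub> x = x" "x \<otimes>\<^bsub>unitri_group n\<^esub> \<one>\<^bsub>unitri_group n\<^esub> = x"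
    by (simp_all add: one_unitri_group fun_of_mat_mult)
qed

lemma fun_of_mat_pow:
  "A \<in> carrier_mat n n \<Longrightarrow> fun_of_mat n A [^]\<^bsub>unitri_group n\<^esub> k = fun_of_mat n (A ^\<^sub>m k)"
  by (induction k) (simp_all add: one_unitri_group fun_of_mat_mult)

lemma group_embeds_unitri_groupI:
  fixes f :: "'b \<Rightarrow> 'a::field mat"
  assumes unitri: "\<And>x. x \<in> carrier G \<Longrightarrow> unitriangular n (f x)"
    and mult: "\<And>x y. x \<in> carrier G \<Longrightarrow> y \<in> carrier G \<Longrightarrow> f (x \<otimes>\<^bsub>G\<^esub> y) = f x * f y"
    and inj: "inj_on f (carrier G)"
  shows "group_embeds G (unitri_group n :: (nat \<Rightarrow> nat \<Rightarrow> 'a) monoid)"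
  unfolding group_embeds_def
proof (intro exI conjI)
  have fc: "f x \<in> carrier_mat n n" if "x \<in> carrier G" for x
    using unitri[OF that] by (simp add: unitriangular_def)
  show "fun_of_mat n \<circ> f \<in> hom G (unitri_group n)"
    using unitri fc by (auto intro!: homI simp: carrier_unitri_group mult fun_of_mat_mult)
  show "inj_on (fun_of_mat n \<circ> f) (carrier G)"
    by (rule comp_inj_on[OF inj inj_on_subset[OF inj_on_fun_of_mat]]) (auto intro: fc)
qed

section \<open>Exponent of \<open>U_n(K)\<close> for \<open>n \<le> p\<close>\<close>

lemma of_nat_choose_prime:
  assumes p: "Factorial_Ring.prime p" and char: "CHAR('a::semiring_1) = p" and k: "k \<le> p"
  shows "(of_nat (p choose k) :: 'a) = (if k = 0 \<or> k = p then 1 else 0)"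
  using dvd_choose_prime[of k p] p k char prime_gt_0_nat[OF p]
  by (auto simp: of_nat_eq_0_iff_char_dvd)

lemma sum_choose_pascal:
  fixes g :: "nat \<Rightarrow> 'a::comm_semiring_1"
  shows "(\<Sum>k\<le>m. of_nat (m choose k) * (g k + g (Suc k))) = (\<Sum>k\<le>Suc m. of_nat (Suc m choose k) * g k)"
proof -
  have a: "(\<Sum>k\<le>Suc m. of_nat (Suc m choose k) * g k)
     = g 0 + ((\<Sum>k\<le>m. of_nat (m choose k) * g (Suc k)) + (\<Sum>k\<le>m. of_nat (m choose Suc k) * g (Suc k)))"
    by (subst sum.atMost_Suc_shift) (simp add: distrib_right sum.distrib del: sum.atMost_Suc)
  have b: "(\<Sum>k\<le>m. of_nat (m choose k) * g k) = g 0 + (\<Sum>k<m. of_nat (m choose Suc k) * g (Suc k))"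
    unfolding lessThan_Suc_atMost[symmetric] sum.lessThan_Suc_shift by simp
  have c: "(\<Sum>k\<le>m. of_nat (m choose Suc k) * g (Suc k)) = (\<Sum>k<m. of_nat (m choose Suc k) * g (Suc k))"
    unfolding lessThan_Suc_atMost[symmetric] by (simp add: binomial_eq_0)
  show ?thesis unfolding a by (simp add: distrib_left sum.distrib b c add_ac)
qed

lemma index_pow_one_plus_mat:
  fixes D :: "'a::comm_ring_1 mat"
  assumes D: "D \<in> carrier_mat n n" and ij: "i < n" "j < n"
  shows "((1\<^sub>m n + D) ^\<^sub>m m) $$ (i, j) = (\<Sum>k\<le>m. of_nat (m choose k) * (D ^\<^sub>m k) $$ (i, j))"
  using ij
proof (induction m arbitrary: i j)
  case (Suc m)
  let ?M = "1\<^sub>m n + D"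
  have Mm: "?M ^\<^sub>m m \<in> carrier_mat n n" using D by simp
  have "(?M ^\<^sub>m m * D) $$ (i, j) = (\<Sum>l<n. (?M ^\<^sub>m m) $$ (i, l) * D $$ (l, j))"
    using Suc.prems Mm D by (simp add: index_mult_mat_square del: index_mult_mat)
  also have "\<dots> = (\<Sum>k\<le>m. of_nat (m choose k) * (\<Sum>l<n. (D ^\<^sub>m k) $$ (i, l) * D $$ (l, j)))"
    using Suc.IH Suc.prems
    by (simp add: sum_distrib_right sum_distrib_left mult.assoc sum.swap[of _ "{..<n}" "{..m}"])
  also have "\<dots> = (\<Sum>k\<le>m. of_nat (m choose k) * (D ^\<^sub>m Suc k) $$ (i, j))"
    by (intro sum.cong refl)
      (simp add: index_mult_mat_square[OF pow_carrier_mat[OF D] D Suc.prems] del: index_mult_mat)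
  finally have step: "(?M ^\<^sub>m m * D) $$ (i, j) = (\<Sum>k\<le>m. of_nat (m choose k) * (D ^\<^sub>m Suc k) $$ (i, j))" .
  have "(?M ^\<^sub>m Suc m) $$ (i, j) = (?M ^\<^sub>m m) $$ (i, j) + (?M ^\<^sub>m m * D) $$ (i, j)"
    using Suc.prems Mm D by (simp add: mult_add_distrib_mat[OF Mm _ D, of "1\<^sub>m n"])
  also have "\<dots> = (\<Sum>k\<le>m. of_nat (m choose k) * ((D ^\<^sub>m k) $$ (i, j) + (D ^\<^sub>m Suc k) $$ (i, j)))"
    unfolding step Suc.IH[OF Suc.prems] by (simp only: distrib_left sum.distrib)
  also have "\<dots> = (\<Sum>k\<le>Suc m. of_nat (Suc m choose k) * (D ^\<^sub>m k) $$ (i, j))"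
    by (rule sum_choose_pascal[where g = "\<lambda>k. (D ^\<^sub>m k) $$ (i, j)"])
  finally show ?case .
qed (use D in simp)

lemma index_pow_strictly_upper:
  fixes D :: "'a::semiring_1 mat"
  assumes D: "D \<in> carrier_mat n n" and strict: "\<And>i j. i < n \<Longrightarrow> j \<le> i \<Longrightarrow> D $$ (i, j) = 0"
    and ij: "i < n" "j < n" "j < i + k"
  shows "(D ^\<^sub>m k) $$ (i, j) = 0"
  using ij
proof (induction k arbitrary: j)
  case (Suc k)
  have "(D ^\<^sub>m Suc k) $$ (i, j) = (\<Sum>l<n. (D ^\<^sub>m k) $$ (i, l) * D $$ (l, j))"
    using index_mult_mat_square[OF pow_carrier_mat[OF D] D \<open>i < n\<close> \<open>j < n\<close>] by simp
  also have "\<dots> = 0"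
  proof (intro sum.neutral ballI)
    fix l assume l: "l \<in> {..<n}"
    show "(D ^\<^sub>m k) $$ (i, l) * D $$ (l, j) = 0"
    proof (cases "l < i + k")
      case True
      then show ?thesis using Suc.IH[of l] Suc.prems l by simp
    next
      case False
      then show ?thesis using strict[of l j] Suc.prems l by simp
    qed
  qed
  finally show ?case .
qed (use D in simp)

lemma unitriangular_pow_char:
  fixes A :: "'a::field mat"
  assumes p: "Factorial_Ring.prime p" and char: "CHAR('a) = p" and np: "n \<le> p"
    and A: "unitriangular n A"
  shows "A ^\<^sub>m p = 1\<^sub>m n"
proof -
  define D where "D = A - 1\<^sub>m n"
  have Ac: "A \<in> carrier_mat n n" using A by (simp add: unitriangular_def)
  then have Dc: "D \<in> carrier_mat n n" by (simp add: D_def minus_carrier_mat)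
  have AD: "A = 1\<^sub>m n + D" using Ac by (intro eq_matI) (auto simp: D_def)
  have strict: "D $$ (i, j) = 0" if "i < n" "j \<le> i" for i j
    using A that by (cases "j = i") (auto simp: D_def unitriangular_def upper_triangular_def)
  have Dp: "(D ^\<^sub>m p) $$ (i, j) = 0" if "i < n" "j < n" for i j
    using index_pow_strictly_upper[OF Dc strict] that np by simp
  show ?thesis
  proof (rule eq_matI)
    fix i j assume "i < dim_row (1\<^sub>m n :: 'a mat)" "j < dim_col (1\<^sub>m n :: 'a mat)"
    then have ij: "i < n" "j < n" by auto
    have "(A ^\<^sub>m p) $$ (i, j) = (\<Sum>k\<le>p. of_nat (p choose k) * (D ^\<^sub>m k) $$ (i, j))"
      unfolding AD by (rule index_pow_one_plus_mat[OF Dc ij])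
    also have "\<dots> = (\<Sum>k\<le>p. if k = 0 then (1\<^sub>m n :: 'a mat) $$ (i, j) else 0)"
      using of_nat_choose_prime[OF p char] Dp[OF ij] Dc ij prime_gt_0_nat[OF p]
      by (intro sum.cong) auto
    finally show "(A ^\<^sub>m p) $$ (i, j) = (1\<^sub>m n :: 'a mat) $$ (i, j)" by simp
  qed (use Ac in auto)
qed

lemma unitri_group_pow_char:
  assumes "Factorial_Ring.prime p" "CHAR('a::field) = p" "n \<le> p"
    and "x \<in> carrier (unitri_group n :: (nat \<Rightarrow> nat \<Rightarrow> 'a) monoid)"
  shows "x [^]\<^bsub>unitri_group n\<^esub> p = \<one>\<^bsub>unitri_group n\<^esub>"
proof -
  obtain A :: "'a mat" where A: "unitriangular n A" and x: "x = fun_of_mat n A"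
    using assms(4) by (auto simp: carrier_unitri_group)
  then show ?thesis
    using unitriangular_pow_char[OF assms(1-3) A]
    by (simp add: fun_of_mat_pow unitriangular_def one_unitri_group)
qed

lemma group_embeds_unitri_group_pow_char:
  assumes G: "group G" and emb: "group_embeds G (unitri_group n :: (nat \<Rightarrow> nat \<Rightarrow> 'a::field) monoid)"
    and p: "Factorial_Ring.prime p" and char: "CHAR('a) = p" and np: "n \<le> p"
    and x: "x \<in> carrier G"
  shows "x [^]\<^bsub>G\<^esub> p = \<one>\<^bsub>G\<^esub>"
proof -
  interpret G: group G by (rule G)
  interpret U: monoid "unitri_group n :: (nat \<Rightarrow> nat \<Rightarrow> 'a) monoid" by (rule monoid_unitri_group)
  obtain h where h: "h \<in> hom G (unitri_group n :: (nat \<Rightarrow> nat \<Rightarrow> 'a) monoid)" and inj: "inj_on h (carrier G)"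
    using emb by (auto simp: group_embeds_def)
  have hx: "h x \<in> carrier (unitri_group n)" using h x by (rule hom_in_carrier)
  have "h (x [^]\<^bsub>G\<^esub> Suc p) = h x [^]\<^bsub>unitri_group n\<^esub> p \<otimes>\<^bsub>unitri_group n\<^esub> h x"
    using hom_nat_pow_Suc[OF G.monoid_axioms U.monoid_axioms h x] by simp
  also have "\<dots> = h x" using unitri_group_pow_char[OF p char np hx] hx by simp
  finally have "x [^]\<^bsub>G\<^esub> Suc p = x"
    using inj_onD[OF inj _ G.nat_pow_closed[OF x] x] by blast
  then have "x [^]\<^bsub>G\<^esub> p \<otimes>\<^bsub>G\<^esub> x = \<one>\<^bsub>G\<^esub> \<otimes>\<^bsub>G\<^esub> x" using x by simp
  then show ?thesis by (rule G.r_cancel[OF _ G.nat_pow_closed[OF x] G.one_closed x])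
qed

section \<open>Representations of \<open>\<int>/p^2\<close> and \<open>M_{p^3}\<close> in \<open>U_{p+1}(K)\<close>\<close>

lemma prime_dvd_choose_prime_square:
  assumes p: "Factorial_Ring.prime (p::nat)" and d: "0 < d" "d < p^2"
  shows "p dvd (p^2 choose d)"
proof (rule ccontr)
  assume "\<not> p dvd (p^2 choose d)"
  then have "coprime (p^2) (p^2 choose d)"
    using p by (simp add: prime_imp_coprime coprime_power_left_iff)
  moreover have "p^2 dvd d * (p^2 choose d)"
    using times_binomial_minus1_eq[OF d(1), of "p^2"] by simp
  ultimately have "p^2 dvd d" by (simp add: coprime_dvd_mult_left_iff)
  then show False using d by (auto dest: dvd_imp_le)
qed

lemma of_nat_choose_Suc_prime:
  assumes p: "Factorial_Ring.prime p" and char: "CHAR('a::semiring_1) = p" and k: "k \<le> p"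
  shows "(of_nat (Suc p choose k) :: 'a) = (if k = 0 \<or> k = 1 \<or> k = p then 1 else 0)"
proof (cases k)
  case (Suc e)
  have "p \<ge> 2" using p by (rule prime_ge_2_nat)
  then show ?thesis
    using Suc k of_nat_choose_prime[OF p char, of e] of_nat_choose_prime[OF p char, of "Suc e"]
    by auto
qed simp

lemma index_jordan_block_one_pow:
  "i < n \<Longrightarrow> j < n \<Longrightarrow>
    (jordan_block n (1::'a::comm_ring_1) ^\<^sub>m r) $$ (i, j) = (if i \<le> j then of_nat (r choose (j - i)) else 0)"
  by (simp add: jordan_block_pow)

lemma unitriangular_jordan_block_one: "unitriangular n (jordan_block n (1::'a::comm_ring_1))"
  by (simp add: unitriangular_def upper_triangular_def jordan_block_def)

lemma unitriangular_addrow_mat: "k < l \<Longrightarrow> l < n \<Longrightarrow> unitriangular n (addrow_mat n a k l)"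
  by (auto simp: unitriangular_def upper_triangular_def)

lemma addrow_mat_pow:
  assumes "k \<noteq> l" "k < n" "l < n"
  shows "addrow_mat n (1::'a::comm_semiring_1) k l ^\<^sub>m b = addrow_mat n (of_nat b) k l"
proof (induction b)
  case 0
  show ?case by (rule eq_matI) auto
next
  case (Suc b)
  have "addrow_mat n (of_nat b) k l * addrow_mat n 1 k l = addrow (of_nat b) k l (addrow_mat n 1 k l)"
    using assms by (intro addrow_mat[symmetric]) auto
  also have "\<dots> = addrow_mat n (of_nat (Suc b)) k l"
    using assms by (intro eq_matI) (auto simp: add.commute)
  finally show ?case by (simp add: Suc)
qed

lemma monoid_ring_mat: "monoid (ring_mat TYPE('a::semiring_1) n b)"
  by (metis semiring_mat semiring_def)

lemma pow_mat_add:
  assumes A: "(A :: 'a::semiring_1 mat) \<in> carrier_mat n n"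
  shows "A ^\<^sub>m a * A ^\<^sub>m b = A ^\<^sub>m (a + b)"
proof -
  interpret R: monoid "ring_mat TYPE('a) n ()" by (rule monoid_ring_mat)
  show ?thesis
    using R.nat_pow_mult[of A a b] A by (simp add: pow_mat_ring_pow[OF A, where b = "()"] ring_mat_simps)
qed

lemma pow_mat_mod:
  assumes A: "(A :: 'a::semiring_1 mat) \<in> carrier_mat n n" and N: "A ^\<^sub>m N = 1\<^sub>m n"
  shows "A ^\<^sub>m k = A ^\<^sub>m (k mod N)"
proof -
  interpret R: monoid "ring_mat TYPE('a) n ()" by (rule monoid_ring_mat)
  show ?thesis
    using R.nat_pow_mod[of A N k] A N by (simp add: pow_mat_ring_pow[OF A, where b = "()"] ring_mat_simps)
qed

lemma pow_mat_semidirect_mult: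
  fixes A B :: "'a::semiring_1 mat"
  assumes A: "A \<in> carrier_mat n n" and B: "B \<in> carrier_mat n n"
    and BA: "B * A = A ^\<^sub>m m * B" and AN: "A ^\<^sub>m N = 1\<^sub>m n" and BM: "B ^\<^sub>m M = 1\<^sub>m n"
  shows "(A ^\<^sub>m a * B ^\<^sub>m b) * (A ^\<^sub>m c * B ^\<^sub>m d)
       = A ^\<^sub>m ((a + c * m ^ b) mod N) * B ^\<^sub>m ((b + d) mod M)"
proof -
  interpret R: monoid "ring_mat TYPE('a) n ()" by (rule monoid_ring_mat)
  show ?thesis
    using R.semidirect_mult[of A B m N M a b c d] A B BA AN BM
    by (simp add: pow_mat_ring_pow[OF A, where b = "()"] pow_mat_ring_pow[OF B, where b = "()"] ring_mat_simps)
qed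

lemma inj_on_pow_mat_prime_square:
  fixes A :: "'a::semiring_1 mat"
  assumes A: "A \<in> carrier_mat n n" and p: "Factorial_Ring.prime p"
    and sq: "A ^\<^sub>m (p^2) = 1\<^sub>m n" and ne: "A ^\<^sub>m p \<noteq> 1\<^sub>m n"
  shows "inj_on (\<lambda>k. A ^\<^sub>m k) {..<p^2}"
proof -
  interpret R: monoid "ring_mat TYPE('a) n ()" by (rule monoid_ring_mat)
  show ?thesis
    using R.inj_on_nat_pow_prime_square[of A p] A p sq ne
    by (simp add: pow_mat_ring_pow[OF A, where b = "()"] ring_mat_simps)
qed

context
  fixes p :: nat
  assumes prime: "Factorial_Ring.prime p" and char: "CHAR('a::field) = p"
begin

abbreviation J :: "'a mat" where "J \<equiv> jordan_block (p + 1) 1"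

abbreviation Y :: "'a mat" where "Y \<equiv> addrow_mat (p + 1) 1 0 (p - 1)"

lemma p_ge_2: "p \<ge> 2"
  using prime by (rule prime_ge_2_nat)

lemma J_pow_prime_square: "J ^\<^sub>m (p^2) = 1\<^sub>m (p + 1)"
proof (rule eq_matI)
  fix i j assume "i < dim_row (1\<^sub>m (p + 1) :: 'a mat)" "j < dim_col (1\<^sub>m (p + 1) :: 'a mat)"
  then have ij: "i < p + 1" "j < p + 1" by auto
  have "p < p^2" using p_ge_2 by (simp add: power2_eq_square)
  then have "(of_nat (p^2 choose (j - i)) :: 'a) = 0" if "i < j"
    using that ij prime_dvd_choose_prime_square[OF prime, of "j - i"] char
    by (simp add: of_nat_eq_0_iff_char_dvd)
  then show "(J ^\<^sub>m (p^2)) $$ (i, j) = (1\<^sub>m (p + 1) :: 'a mat) $$ (i, j)"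
    using ij by (auto simp: index_jordan_block_one_pow)
qed auto

lemma J_pow_prime_neq: "J ^\<^sub>m p \<noteq> 1\<^sub>m (p + 1)"
proof
  assume "J ^\<^sub>m p = 1\<^sub>m (p + 1)"
  then have "(J ^\<^sub>m p) $$ (0, p) = (1\<^sub>m (p + 1) :: 'a mat) $$ (0, p)" by simp
  then show False using p_ge_2 by (simp add: index_jordan_block_one_pow)
qed

lemma inj_on_J_pow: "inj_on (\<lambda>k. J ^\<^sub>m k) {..<p^2}"
  using jordan_block_carrier prime J_pow_prime_square J_pow_prime_neq
  by (rule inj_on_pow_mat_prime_square)

lemma J_pow_mult: "J ^\<^sub>m a * J ^\<^sub>m b = J ^\<^sub>m ((a + b) mod p^2)"
  using pow_mat_add[OF jordan_block_carrier] pow_mat_mod[OF jordan_block_carrier J_pow_prime_square]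
  by metis

lemma Y_pow: "Y ^\<^sub>m b = addrow_mat (p + 1) (of_nat b) 0 (p - 1)"
  using p_ge_2 by (intro addrow_mat_pow) auto

lemma Y_pow_prime: "Y ^\<^sub>m p = 1\<^sub>m (p + 1)"
  unfolding Y_pow using char by (intro eq_matI) auto

lemma Y_J_commute: "Y * J = J ^\<^sub>m (p + 1) * Y"
proof (rule eq_matI)
  define Jp where "Jp = J ^\<^sub>m (p + 1)"
  fix i j assume "i < dim_row (Jp * Y)" "j < dim_col (Jp * Y)"
  then have ij: "i < p + 1" "j < p + 1" by (auto simp: Jp_def)
  have "Y * J = addrow 1 0 (p - 1) J" by (intro addrow_mat[symmetric]) auto
  moreover have "Jp * Y = addcol 1 (p - 1) 0 Jp"
    unfolding Jp_def by (intro addcol_mat[symmetric]) auto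
  moreover have "Jp $$ (i, j) = J $$ (i, j) + (if i = 0 \<and> j = p then 1 else 0)"
    unfolding Jp_def index_jordan_block_one_pow[OF ij]
    using ij p_ge_2 of_nat_choose_Suc_prime[OF prime char, of "j - i"] by auto
  moreover have "Jp $$ (i, 0) = (if i = 0 then 1 else 0)"
  proof -
    have pos: "0 < p + 1" by simp
    show ?thesis unfolding Jp_def index_jordan_block_one_pow[OF ij(1) pos] by simp
  qed
  moreover have "dim_row Jp = p + 1" "dim_col Jp = p + 1" by (simp_all add: Jp_def)
  ultimately show "(Y * J) $$ (i, j) = (Jp * Y) $$ (i, j)"
    using ij p_ge_2 by auto
qed auto

lemma J_pow_Y_pow_mult:
  "(J ^\<^sub>m a * Y ^\<^sub>m b) * (J ^\<^sub>m c * Y ^\<^sub>m d)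
    = J ^\<^sub>m ((a + c * (1 + p) ^ b) mod p^2) * Y ^\<^sub>m ((b + d) mod p)"
  using Y_J_commute J_pow_prime_square Y_pow_prime
  by (intro pow_mat_semidirect_mult) auto

lemma index_J_pow_Y_pow:
  assumes ij: "i < p + 1" "j < p + 1"
  shows "(J ^\<^sub>m a * Y ^\<^sub>m b) $$ (i, j)
    = (if i \<le> j then of_nat (a choose (j - i)) else 0) + (if i = 0 \<and> j = p - 1 then of_nat b else 0)"
proof -
  have "J ^\<^sub>m a * Y ^\<^sub>m b = addcol (of_nat b) (p - 1) 0 (J ^\<^sub>m a)"
    unfolding Y_pow by (intro addcol_mat[symmetric]) auto
  then show ?thesis
    using ij by (auto simp: index_jordan_block_one_pow)
qed

lemma group_embeds_integer_mod_group:
  "group_embeds (integer_mod_group (p^2)) (unitri_group (p + 1) :: (nat \<Rightarrow> nat \<Rightarrow> 'a) monoid)"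
proof (rule group_embeds_unitri_groupI)
  have carrier: "carrier (integer_mod_group (p^2)) = {0..<int (p^2)}"
    using prime by (simp add: carrier_integer_mod_group prime_gt_0_nat)
  show "unitriangular (p + 1) (J ^\<^sub>m nat x)" for x
    by (intro unitriangular_pow unitriangular_jordan_block_one)
  show "J ^\<^sub>m nat (x \<otimes>\<^bsub>integer_mod_group (p^2)\<^esub> y) = J ^\<^sub>m nat x * J ^\<^sub>m nat y"
    if "x \<in> carrier (integer_mod_group (p^2))" "y \<in> carrier (integer_mod_group (p^2))" for x y
  proof -
    have "nat ((x + y) mod int (p^2)) = (nat x + nat y) mod p^2"
      using that carrier by (simp add: nat_mod_distrib nat_add_distrib flip: of_nat_power)
    then show ?thesis using J_pow_mult[of "nat x" "nat y"] by simp
  qed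
  show "inj_on (\<lambda>x. J ^\<^sub>m nat x) (carrier (integer_mod_group (p^2)))"
  proof (rule inj_onI)
    fix x y assume x: "x \<in> carrier (integer_mod_group (p^2))" and y: "y \<in> carrier (integer_mod_group (p^2))"
      and eq: "J ^\<^sub>m nat x = J ^\<^sub>m nat y"
    have "nat x \<in> {..<p^2}" "nat y \<in> {..<p^2}" using x y carrier by (auto simp: nat_less_iff)
    then have "nat x = nat y" using inj_onD[OF inj_on_J_pow eq] by blast
    then show "x = y" using x y carrier eq_nat_nat_iff by auto
  qed
qed

lemma group_embeds_Mp3:
  "group_embeds (Mp3 p) (unitri_group (p + 1) :: (nat \<Rightarrow> nat \<Rightarrow> 'a) monoid)"
proof (rule group_embeds_unitri_groupI[where f = "\<lambda>(a, b). J ^\<^sub>m a * Y ^\<^sub>m b"])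
  let ?f = "\<lambda>(a, b). J ^\<^sub>m a * Y ^\<^sub>m b"
  show "unitriangular (p + 1) (?f x)" for x
    using p_ge_2
    by (auto simp: unitriangular_mult unitriangular_pow unitriangular_jordan_block_one
        unitriangular_addrow_mat split: prod.split)
  show "?f (x \<otimes>\<^bsub>Mp3 p\<^esub> y) = ?f x * ?f y" for x y
    by (cases x, cases y) (simp only: Mp3_mult case_prod_conv J_pow_Y_pow_mult)
  show "inj_on ?f (carrier (Mp3 p))"
  proof (rule inj_onI)
    fix x y assume x: "x \<in> carrier (Mp3 p)" and y: "y \<in> carrier (Mp3 p)" and eq: "?f x = ?f y"
    obtain a b c d where xy: "x = (a, b)" "y = (c, d)" by (cases x, cases y)
    then have bounds: "a < p^2" "c < p^2" "b < p" "d < p" using x y by (auto simp: Mp3_def)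
    have entry: "(if i \<le> j then of_nat (a choose (j - i)) else 0) + (if i = 0 \<and> j = p - 1 then of_nat b else 0)
      = (if i \<le> j then of_nat (c choose (j - i)) else (0::'a)) + (if i = 0 \<and> j = p - 1 then of_nat d else 0)"
      if "i < p + 1" "j < p + 1" for i j
      using eq index_J_pow_Y_pow[OF that, of a b] index_J_pow_Y_pow[OF that, of c d] xy by simp
    have "J ^\<^sub>m a = J ^\<^sub>m c"
    proof (rule eq_matI)
      fix i j assume "i < dim_row (J ^\<^sub>m c)" "j < dim_col (J ^\<^sub>m c)"
      then have ij: "i < p + 1" "j < p + 1" by (simp_all add: jordan_block_def split: if_splits)
      show "(J ^\<^sub>m a) $$ (i, j) = (J ^\<^sub>m c) $$ (i, j)"
      proof (cases "i = 0 \<and> j = p - 1")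
        case True
        \<comment> \<open>the entry masked by Y reappears one step further down the same diagonal\<close>
        then show ?thesis
          using entry[of 1 p] p_ge_2 by (simp add: index_jordan_block_one_pow)
      next
        case False
        then show ?thesis
          using entry[OF ij] ij by (auto simp: index_jordan_block_one_pow split: if_splits)
      qed
    qed auto
    then have "a = c" using inj_on_J_pow bounds by (auto dest: inj_onD)
    moreover have "(of_nat b :: 'a) = of_nat d"
      using entry[of 0 "p - 1"] \<open>a = c\<close> p_ge_2 by simp
    then have "b = d"
      using bounds char by (auto simp: of_nat_eq_iff_cong_CHAR intro: cong_less_modulus_unique_nat)
    ultimately show "x = y" using xy by simp
  qed
qed

end

theorem corollary3p8:
  fixes p :: nat
  assumes "Factorial_Ring.prime p" and "odd p" and "CHAR('a::field) = p"
  shows "group_embeds (integer_mod_group (p^2)) (unitri_group (p + 1) :: (nat \<Rightarrow> nat \<Rightarrow> 'a) monoid)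
       \<and> (\<forall>n. group_embeds (integer_mod_group (p^2)) (unitri_group n :: (nat \<Rightarrow> nat \<Rightarrow> 'a) monoid)
              \<longrightarrow> p + 1 \<le> n)
       \<and> group_embeds (Mp3 p) (unitri_group (p + 1) :: (nat \<Rightarrow> nat \<Rightarrow> 'a) monoid)
       \<and> (\<forall>n. group_embeds (Mp3 p) (unitri_group n :: (nat \<Rightarrow> nat \<Rightarrow> 'a) monoid)
              \<longrightarrow> p + 1 \<le> n)"
proof -
  have p: "0 < p" "p < p^2" "1 < p^2"
    using prime_ge_2_nat[OF assms(1)] by (simp_all add: power2_eq_square one_less_mult)
  have Z: "(1::int) \<in> carrier (integer_mod_group (p^2))"
      "1 [^]\<^bsub>integer_mod_group (p^2)\<^esub> p \<noteq> \<one>\<^bsub>integer_mod_group (p^2)\<^esub>"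
    using p by (simp_all add: carrier_integer_mod_group flip: of_nat_power)
  have M: "(1, 0) \<in> carrier (Mp3 p)" "(1, 0) [^]\<^bsub>Mp3 p\<^esub> p \<noteq> \<one>\<^bsub>Mp3 p\<^esub>"
    unfolding Mp3_pow_generator using p by (simp_all add: Mp3_def)
  have Mp3: "group (Mp3 p)" using p(1) by (rule group_Mp3)
  show ?thesis
  proof (intro conjI allI impI)
    show "p + 1 \<le> n"
      if "group_embeds (integer_mod_group (p^2)) (unitri_group n :: (nat \<Rightarrow> nat \<Rightarrow> 'a) monoid)" for n
      using group_embeds_unitri_group_pow_char[OF group_integer_mod_group that assms(1,3) _ Z(1)] Z(2)
      by linarith
    show "p + 1 \<le> n" if "group_embeds (Mp3 p) (unitri_group n :: (nat \<Rightarrow> nat \<Rightarrow> 'a) monoid)" for n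
      using group_embeds_unitri_group_pow_char[OF Mp3 that assms(1,3) _ M(1)] M(2)
      by linarith
  qed (use group_embeds_integer_mod_group[OF assms(1,3)] group_embeds_Mp3[OF assms(1,3)] in auto)
qed

end
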